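(* Let $p$ be a prime and let $G$ be a nontrivial finite $p$-group. Then there exists an element $z\in G$ of order $p$ such that $|I_{\mathcal C}(z)|=n_G$.
   Context: For a finite group $G$ and $x\in G$, let $I_{\mathcal C}(x)=\{y\in G : \langle x,y\rangle \text{ is cyclic}\}$. For a nontrivial finite group $G$, $n_G=\max\{|I_{\mathcal C}(x)| : x\in G\setminus\{1\}\}$. *)

theory Defs
  imports "HOL-Algebra.Algebra"
begin

definition I_C :: "('a, 'b) monoid_scheme \<Rightarrow> 'a \<Rightarrow> 'a set" where
  "I_C G x = {y \<in> carrier G. cyclic_group (subgroup_generated G {x, y})}"

definition n_G :: "('a, 'b) monoid_scheme \<Rightarrow> nat" where
  "n_G G = Max ((\<lambda>x. card (I_C G x)) ` (carrier G - {\<one>\<^bsub>G\<^esub>}))"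

end

theory Submission
  imports Defs
begin

text \<open>Choose \<open>x \<noteq> 1\<close> with \<open>|I_C(x)| = n_G\<close>. In a \<open>p\<close>-group the order of \<open>x\<close> is a
  nontrivial power of \<open>p\<close>, so some power \<open>z\<close> of \<open>x\<close> has order \<open>p\<close>. Since \<open>\<langle>z, y\<rangle>\<close> is a
  subgroup of \<open>\<langle>x, y\<rangle>\<close> and subgroups of cyclic groups are cyclic, \<open>I_C(x) \<subseteq> I_C(z)\<close>;
  maximality of \<open>|I_C(x)|\<close> then gives \<open>|I_C(z)| = n_G\<close>.\<close>

lemma (in group) subgroup_of_powers_is_powers:
  assumes H: "subgroup H G" and g: "g \<in> carrier G"
    and H_powers: "H \<subseteq> range (\<lambda>n::int. g [^] n)"
  shows "\<exists>h\<in>H. H = range (\<lambda>n::int. h [^] n)"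
proof -
  define S where "S = {n::nat. 0 < n \<and> g [^] n \<in> H}"
  \<comment> \<open>\<open>S = {}\<close> happens exactly when \<open>H\<close> is trivial; then \<open>d = 0\<close> and \<open>h = \<one>\<close>.\<close>
  define d where "d = (if S = {} then 0 else Least (\<lambda>n. n \<in> S))"
  define h where "h = g [^] int d"
  have d_in_S: "d \<in> S" if "S \<noteq> {}"
    using that LeastI_ex[of "\<lambda>n. n \<in> S"] unfolding d_def by auto
  have d_min: "d \<le> n" if "n \<in> S" for n
    using that Least_le[of "\<lambda>n. n \<in> S"] unfolding d_def by auto
  have hH: "h \<in> H"
  proof (cases "S = {}")
    case True
    then show ?thesis using H by (simp add: h_def d_def subgroup.one_closed)
  next
    case False
    then show ?thesis using d_in_S by (simp add: h_def S_def int_pow_int)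
  qed
  have abs_exponent_in_S: "nat \<bar>r\<bar> \<in> S" if r: "g [^] r \<in> H" "r \<noteq> 0" for r :: int
  proof -
    have "g [^] nat \<bar>r\<bar> = g [^] \<bar>r\<bar>"
      by (metis abs_ge_zero int_nat_eq int_pow_int)
    also have "\<dots> \<in> H"
      using r g H by (cases "r \<ge> 0") (auto simp: int_pow_neg subgroup.m_inv_closed)
    finally show ?thesis using r(2) by (simp add: S_def)
  qed
  have "H \<subseteq> range (\<lambda>n::int. h [^] n)"
  proof
    fix a assume aH: "a \<in> H"
    then obtain i :: int where ai: "a = g [^] i" using H_powers by blast
    define q r where "q = i div int d" and "r = i mod int d"
    have i_eq: "i = int d * q + r" unfolding q_def r_def by simp
    have "a = h [^] q \<otimes> g [^] r"
      using g unfolding ai i_eq h_def by (simp add: int_pow_mult int_pow_pow)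
    then have "g [^] r = inv (h [^] q) \<otimes> a"
      using g h_def by (simp add: inv_solve_left)
    also have "\<dots> \<in> H"
      using H hH aH by (simp add: subgroup.m_closed subgroup.m_inv_closed subgroup_int_pow_closed)
    finally have r_exp: "g [^] r \<in> H" .
    have "r = 0"
    proof (rule ccontr)
      assume "r \<noteq> 0"
      with r_exp have "nat \<bar>r\<bar> \<in> S" by (rule abs_exponent_in_S)
      moreover have "0 \<le> r" "r < int d" if "S \<noteq> {}"
        using d_in_S[OF that] unfolding r_def S_def by auto
      ultimately show False using d_min[of "nat \<bar>r\<bar>"] by fastforce
    qed
    then show "a \<in> range (\<lambda>n::int. h [^] n)"
      using ai g i_eq by (simp add: h_def int_pow_pow)
  qed
  then show ?thesis
    using hH H by (auto intro!: bexI[of _ h] simp: subgroup_int_pow_closed)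
qed

lemma (in group) cyclic_group_subgroup_generated_subset:
  assumes cyclic: "cyclic_group (subgroup_generated G A)"
    and B: "B \<subseteq> carrier (subgroup_generated G A)"
  shows "cyclic_group (subgroup_generated G B)"
proof -
  let ?A = "subgroup_generated G A" and ?B = "subgroup_generated G B"
  obtain g where g: "g \<in> carrier ?A" and A_powers: "carrier ?A = range (\<lambda>n::int. g [^] n)"
    using cyclic group.cyclic_group[OF group_subgroup_generated]
    by (auto simp: int_pow_subgroup_generated)
  have "carrier ?B \<subseteq> carrier ?A"
    using B by (intro subgroup_generated_minimal subgroup_subgroup_generated)
  then obtain h where h: "h \<in> carrier ?B" and "carrier ?B = range (\<lambda>n::int. h [^] n)"
    using subgroup_of_powers_is_powers[OF subgroup_subgroup_generated, of g B] g A_powers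
      carrier_subgroup_generated_subset by blast
  then have "carrier ?B = range (\<lambda>n::int. h [^]\<^bsub>?B\<^esub> n)"
    by (simp add: int_pow_subgroup_generated)
  then show ?thesis
    using h group.cyclic_group[OF group_subgroup_generated] by blast
qed

lemma (in group) I_C_subset_I_C_pow:
  assumes x: "x \<in> carrier G"
  shows "I_C G x \<subseteq> I_C G (x [^] (n::nat))"
proof
  fix y assume "y \<in> I_C G x"
  then have y: "y \<in> carrier G" and cyclic: "cyclic_group (subgroup_generated G {x, y})"
    unfolding I_C_def by auto
  have "{x, y} \<subseteq> carrier (subgroup_generated G {x, y})"
    using x y subgroup_generated_subset_carrier_subset[of "{x, y}"] by auto
  then have "{x [^] n, y} \<subseteq> carrier (subgroup_generated G {x, y})"
    using subgroup_int_pow_closed[OF subgroup_subgroup_generated, where k="int n"]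
    by (auto simp: int_pow_int)
  then have "cyclic_group (subgroup_generated G {x [^] n, y})"
    using cyclic by (rule cyclic_group_subgroup_generated_subset[rotated])
  then show "y \<in> I_C G (x [^] n)"
    using y unfolding I_C_def by auto
qed

lemma (in group) ord_pow_ord_div:
  assumes x: "x \<in> carrier G" and "k dvd ord x" and "ord x \<noteq> 0"
  shows "ord (x [^] (ord x div k)) = k"
  using assms ord_pow[OF x, of "ord x div k"] by (auto simp: dvd_def)

lemma (in group) prime_dvd_ord_if_order_prime_power:
  assumes "Factorial_Ring.prime p" and "order G = p ^ k" and x: "x \<in> carrier G" and "x \<noteq> \<one>"
  shows "p dvd ord x"
proof -
  have "ord x dvd p ^ k"
    using ord_dvd_group_order[OF x] assms(2) by simp
  then obtain i where i: "ord x = p ^ i"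
    using assms(1) divides_primepow_nat by blast
  moreover have "i \<noteq> 0"
    using i ord_eq_1[OF x] assms(4) by auto
  ultimately show ?thesis by simp
qed

lemma (in monoid) n_G_attained:
  assumes "finite (carrier G)" and "carrier G \<noteq> {\<one>\<^bsub>G\<^esub>}"
  shows "\<exists>x \<in> carrier G - {\<one>\<^bsub>G\<^esub>}. card (I_C G x) = n_G G"
proof -
  have "n_G G \<in> (\<lambda>x. card (I_C G x)) ` (carrier G - {\<one>\<^bsub>G\<^esub>})"
    unfolding n_G_def using assms by (intro Max_in) auto
  then show ?thesis by auto
qed

lemma (in monoid) card_I_C_le_n_G:
  assumes "finite (carrier G)" and "x \<in> carrier G" and "x \<noteq> \<one>\<^bsub>G\<^esub>"
  shows "card (I_C G x) \<le> n_G G"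
  unfolding n_G_def using assms by (intro Max_ge) auto

theorem lemma2p1:
  fixes G :: "('a, 'b) monoid_scheme" and p :: nat
  assumes "group G" and "Factorial_Ring.prime p" and "finite (carrier G)"
    and "\<exists>k. order G = p ^ k"
    and "carrier G \<noteq> {\<one>\<^bsub>G\<^esub>}"
  shows "\<exists>z \<in> carrier G. group.ord G z = p \<and> card (I_C G z) = n_G G"
proof -
  interpret group G by fact
  obtain x where x: "x \<in> carrier G" "x \<noteq> \<one>\<^bsub>G\<^esub>" and x_max: "card (I_C G x) = n_G G"
    using n_G_attained assms(3,5) by blast
  obtain k where "order G = p ^ k" using assms(4) by blast
  then have "p dvd ord x"
    using prime_dvd_ord_if_order_prime_power assms(2) x by blast
  define z where "z = x [^]\<^bsub>G\<^esub> (ord x div p)"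
  have z: "z \<in> carrier G" using x by (simp add: z_def)
  have ord_z: "ord z = p"
    using ord_pow_ord_div[OF x(1) \<open>p dvd ord x\<close>] ord_ge_1[OF assms(3) x(1)] by (simp add: z_def)
  then have "z \<noteq> \<one>\<^bsub>G\<^esub>"
    using ord_eq_1[OF z] prime_gt_1_nat[OF assms(2)] by auto
  have "finite (I_C G z)"
    by (rule finite_subset[OF _ assms(3)]) (auto simp: I_C_def)
  moreover have "I_C G x \<subseteq> I_C G z"
    unfolding z_def by (rule I_C_subset_I_C_pow[OF x(1)])
  ultimately have "n_G G \<le> card (I_C G z)"
    using x_max card_mono by metis
  moreover have "card (I_C G z) \<le> n_G G"
    by (rule card_I_C_le_n_G) fact+
  ultimately show ?thesis
    using z ord_z by auto
qed

end
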